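(* For every $a\in C\ell_{1,2}$, $L(a^+)=L(a)^+$ and $R(a^+)=R(a)^+$, where on the right-hand sides $M^+$ denotes the Moore–Penrose inverse of a real matrix $M$.
   Context: $C\ell_{1,2}$ is the real Clifford algebra generated by $i_1,i_2,i_3$ with $i_1^2=1$, $i_2^2=i_3^2=-1$ and $i_ti_m=-i_mi_t$ for $t\neq m$, with real basis $e_0=1$, $e_1=i_1$, $e_2=i_2$, $e_3=i_1i_2$, $e_4=i_3$, $e_5=i_1i_3$, $e_6=i_2i_3$, $e_7=i_1i_2i_3$. For $x=\sum_{t=0}^7x_te_t$ write $\overrightarrow{x}=(x_0,\dots,x_7)^T$. $L(a)$, $R(a)$ are the real $8\times8$ matrices with $\overrightarrow{ax}=L(a)\overrightarrow{x}$, $\overrightarrow{xa}=R(a)\overrightarrow{x}$ for all $x$. The prime of $a=\sum a_te_t$ is $a'=a_0+a_1e_1-a_2e_2+a_3e_3-a_4e_4+a_5e_5-a_6e_6-a_7e_7$. For every $a$ there is a unique $x\in C\ell_{1,2}$ with $axa=a$, $xax=x$, $(ax)'=ax$, $(xa)'=xa$, denoted $a^+$ (the Moore–Penrose inverse of $a$). *)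

theory Defs
  imports "Jordan_Normal_Form.Matrix"
begin

text \<open>Elements of Cl(1,2) are represented by their coordinate vectors
  (x_0,...,x_7) w.r.t. the basis e_0,...,e_7, i.e. by real vectors of dimension 8.
  The basis element e_t is the product of the generators i_(k+1) for those k < 3
  with bit k of t set, in increasing order (e_3 = i1 i2, e_5 = i1 i3, e_6 = i2 i3,
  e_7 = i1 i2 i3).\<close>

definition gen_sq :: "nat \<Rightarrow> real" where
  "gen_sq k = (if k = 0 then 1 else -1)"

text \<open>e_s * e_t = clsign s t * e_(s xor t): the sign counts the anticommuting
  transpositions needed to sort the generators, times the squares of repeated generators.\<close>
definition clsign :: "nat \<Rightarrow> nat \<Rightarrow> real" where
  "clsign s t =
     (-1) ^ card {(k, j). k < 3 \<and> j < 3 \<and> bit s k \<and> bit t j \<and> j < k}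
     * (\<Prod>k\<in>{k. k < 3 \<and> bit s k \<and> bit t k}. gen_sq k)"

definition cl_mult :: "real vec \<Rightarrow> real vec \<Rightarrow> real vec" where
  "cl_mult x y = vec 8 (\<lambda>r. \<Sum>s<8. \<Sum>t<8.
      (if xor s t = r then clsign s t * (x $ s) * (y $ t) else 0))"

definition prime_sign :: "nat \<Rightarrow> real" where
  "prime_sign t = [1, 1, -1, 1, -1, 1, -1, -1] ! t"

definition cl_prime :: "real vec \<Rightarrow> real vec" where
  "cl_prime x = vec 8 (\<lambda>t. prime_sign t * (x $ t))"

definition Lmat :: "real vec \<Rightarrow> real mat" where
  "Lmat a = (THE M. M \<in> carrier_mat 8 8 \<and> (\<forall>x\<in>carrier_vec 8. M *\<^sub>v x = cl_mult a x))"

definition Rmat :: "real vec \<Rightarrow> real mat" where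
  "Rmat a = (THE M. M \<in> carrier_mat 8 8 \<and> (\<forall>x\<in>carrier_vec 8. M *\<^sub>v x = cl_mult x a))"

definition cl_mp :: "real vec \<Rightarrow> real vec" where
  "cl_mp a = (THE x. x \<in> carrier_vec 8 \<and> cl_mult (cl_mult a x) a = a
       \<and> cl_mult (cl_mult x a) x = x
       \<and> cl_prime (cl_mult a x) = cl_mult a x \<and> cl_prime (cl_mult x a) = cl_mult x a)"

definition mat_mp :: "real mat \<Rightarrow> real mat" where
  "mat_mp M = (THE X. X \<in> carrier_mat (dim_col M) (dim_row M)
       \<and> M * X * M = M \<and> X * M * X = X
       \<and> (M * X)\<^sup>T = M * X \<and> (X * M)\<^sup>T = X * M)"

end

theory Submission
  imports Defs
begin

text \<open>Left and right multiplication turn Cl(1,2) into 8 x 8 real matrices: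
  L is a homomorphism, R an anti-homomorphism, and since the prime is the adjoint of
  left and right multiplication with respect to the coordinate inner product,
  L(a') = L(a)^T and R(a') = R(a)^T.  Hence L and R carry the four Penrose equations
  for a^+ to the Penrose equations for L(a) and R(a), and uniqueness of the matrix
  Moore--Penrose inverse gives the claim.  The same uniqueness, pulled back along the
  injective map L, shows that a^+ is unique.

  Existence of a^+ comes from the norm a a-bar (a-bar the Clifford conjugate), which
  lies in the centre span{1, e_7}, a copy of the complex numbers.  If the norm is
  nonzero, a is invertible with inverse a-bar (a a-bar)^-1.  Otherwise the identity
  a a' a + (a a-bar)(a-bar)' = 2 |a|^2 a shows that a^+ = a' / (2 |a|^2) for a \<noteq> 0.\<close>

lemma eq_vec8I:
  assumes "dim_vec x = 8" "dim_vec y = 8"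
    and "x $ 0 = y $ 0" "x $ 1 = y $ 1" "x $ 2 = y $ 2" "x $ 3 = y $ 3"
    and "x $ 4 = y $ 4" "x $ 5 = y $ 5" "x $ 6 = y $ 6" "x $ 7 = y $ 7"
  shows "x = y"
proof (rule eq_vecI)
  fix i assume "i < dim_vec y"
  then have "i < 8" using assms(2) by simp
  then show "x $ i = y $ i"
    using assms(3-) by (auto simp: less_Suc_eq numeral_eq_Suc)
qed (use assms in simp)

lemma scalar_prod_8: "dim_vec y = 8 \<Longrightarrow> x \<bullet> y =
  x $ 0 * y $ 0 + x $ 1 * y $ 1 + x $ 2 * y $ 2 + x $ 3 * y $ 3
  + x $ 4 * y $ 4 + x $ 5 * y $ 5 + x $ 6 * y $ 6 + x $ 7 * y $ 7"
  by (simp add: scalar_prod_def atLeast0LessThan lessThan_nat_numeral ac_simps)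

lemma scalar_prod_self_eq_0D:
  fixes v :: "'a::linordered_idom vec"
  assumes "v \<bullet> v = 0"
  shows "v = 0\<^sub>v (dim_vec v)"
proof -
  from assms have "\<forall>i\<in>{0..<dim_vec v}. v $ i * v $ i = 0"
    unfolding scalar_prod_def by (subst (asm) sum_nonneg_eq_0_iff) auto
  then show "v = 0\<^sub>v (dim_vec v)" by (intro eq_vecI) auto
qed

lemma eq_mat_on_vecI:
  fixes A B :: "'a::semiring_1 mat"
  assumes A: "A \<in> carrier_mat n m" and B: "B \<in> carrier_mat n m"
    and eq: "\<And>x. x \<in> carrier_vec m \<Longrightarrow> A *\<^sub>v x = B *\<^sub>v x"
  shows "A = B"
proof (rule eq_matI)
  fix i j assume "i < dim_row B" "j < dim_col B"
  with A B have "A $$ (i, j) = (A *\<^sub>v unit_vec m j) $ i" "B $$ (i, j) = (B *\<^sub>v unit_vec m j) $ i"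
    by auto
  then show "A $$ (i, j) = B $$ (i, j)" using eq[of "unit_vec m j"] by simp
qed (use A B in auto)

lemma transpose_eq_adjointI:
  fixes A B :: "'a::comm_semiring_1 mat"
  assumes A: "A \<in> carrier_mat n m" and B: "B \<in> carrier_mat m n"
    and adj: "\<And>x y. x \<in> carrier_vec m \<Longrightarrow> y \<in> carrier_vec n \<Longrightarrow>
      (A *\<^sub>v x) \<bullet> y = x \<bullet> (B *\<^sub>v y)"
  shows "A\<^sup>T = B"
proof (rule eq_matI)
  fix i j assume "i < dim_row B" "j < dim_col B"
  with A B have "A\<^sup>T $$ (i, j) = (A *\<^sub>v unit_vec m i) \<bullet> unit_vec n j"
    "B $$ (i, j) = unit_vec m i \<bullet> (B *\<^sub>v unit_vec n j)"
    by auto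
  then show "A\<^sup>T $$ (i, j) = B $$ (i, j)" using adj by simp
qed (use A B in auto)

lemma the_mat_representing:
  fixes M :: "'a::semiring_1 mat"
  assumes "M \<in> carrier_mat n m" and "\<And>x. x \<in> carrier_vec m \<Longrightarrow> M *\<^sub>v x = f x"
  shows "(THE M. M \<in> carrier_mat n m \<and> (\<forall>x\<in>carrier_vec m. M *\<^sub>v x = f x)) = M"
  using assms by (intro the_equality) (auto intro: eq_mat_on_vecI)

definition is_mat_mp :: "'a::comm_ring_1 mat \<Rightarrow> 'a mat \<Rightarrow> bool" where
  "is_mat_mp A X \<longleftrightarrow> X \<in> carrier_mat (dim_col A) (dim_row A)
     \<and> A * X * A = A \<and> X * A * X = X \<and> (A * X)\<^sup>T = A * X \<and> (X * A)\<^sup>T = X * A"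

text \<open>The projections A X and X A are determined by A, and then X = X (A X) is too.\<close>

lemma is_mat_mp_unique:
  fixes A :: "'a::comm_ring_1 mat"
  assumes "is_mat_mp A X" and "is_mat_mp A Y"
  shows "X = Y"
proof -
  obtain n m where A: "A \<in> carrier_mat n m"
    using carrier_mat_triv by blast
  with assms have X: "X \<in> carrier_mat m n" and AXA: "A * X * A = A" and XAX: "X * A * X = X"
    and AX: "(A * X)\<^sup>T = A * X" and XA: "(X * A)\<^sup>T = X * A"
    and Y: "Y \<in> carrier_mat m n" and AYA: "A * Y * A = A" and YAY: "Y * A * Y = Y"
    and AY: "(A * Y)\<^sup>T = A * Y" and YA: "(Y * A)\<^sup>T = Y * A"
    unfolding is_mat_mp_def by auto
  have AT: "A\<^sup>T \<in> carrier_mat m n" and XT: "X\<^sup>T \<in> carrier_mat n m"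
    using A X by auto
  have AXc: "A * X \<in> carrier_mat n n" and AYc: "A * Y \<in> carrier_mat n n"
    and XAc: "X * A \<in> carrier_mat m m" and YAc: "Y * A \<in> carrier_mat m m"
    using A X Y by auto
  have "A * X = X\<^sup>T * A\<^sup>T" using AX transpose_mult[OF A X] by simp
  also have "\<dots> = X\<^sup>T * (A\<^sup>T * (A * Y)\<^sup>T)"
    using AYA transpose_mult[OF AYc A] by metis
  also have "\<dots> = A * X * (A * Y)"
    using AX AY transpose_mult[OF A X] assoc_mult_mat[OF XT AT] AYc by (simp add: transpose_carrier_mat)
  also have "\<dots> = A * X * A * Y" using assoc_mult_mat[OF AXc A Y] by simp
  finally have AX_AY: "A * X = A * Y" using AXA by simp
  have "X * A = A\<^sup>T * X\<^sup>T" using XA transpose_mult[OF X A] by simp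
  also have "\<dots> = (Y * A)\<^sup>T * A\<^sup>T * X\<^sup>T"
    using AYA assoc_mult_mat[OF A Y A] transpose_mult[OF A YAc] by metis
  also have "\<dots> = Y * A * (X * A)"
    using XA YA transpose_mult[OF X A] assoc_mult_mat[OF _ AT XT] YAc by (simp add: transpose_carrier_mat)
  also have "\<dots> = Y * (A * X * A)"
    using assoc_mult_mat[OF Y A XAc] assoc_mult_mat[OF A X A] by simp
  finally have XA_YA: "X * A = Y * A" using AXA by simp
  have "X = X * (A * X)" using XAX assoc_mult_mat[OF X A X] by simp
  also have "\<dots> = Y * (A * Y)" using AX_AY XA_YA assoc_mult_mat[OF X A Y] assoc_mult_mat[OF Y A Y] by simp
  also have "\<dots> = Y" using YAY assoc_mult_mat[OF Y A Y] by simp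
  finally show ?thesis .
qed

lemma mat_mp_eqI:
  fixes A :: "real mat"
  assumes "is_mat_mp A X"
  shows "mat_mp A = X"
  unfolding mat_mp_def is_mat_mp_def[symmetric]
  using assms is_mat_mp_unique by blast

text \<open>With lists in place of the finite sets, clsign s t evaluates by simp at numerals.\<close>

lemma clsign_eq:
  "clsign s t =
     (-1) ^ length (filter (\<lambda>(k, j). bit s k \<and> bit t j \<and> j < k) (List.product [0..<3] [0..<3]))
     * (\<Prod>k\<leftarrow>filter (\<lambda>k. bit s k \<and> bit t k) [0..<3]. gen_sq k)"
proof -
  have "{(k, j). k < 3 \<and> j < 3 \<and> bit s k \<and> bit t j \<and> j < k}
      = set (filter (\<lambda>(k, j). bit s k \<and> bit t j \<and> j < k) (List.product [0..<3] [0..<3]))"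
    by auto
  then have "card {(k, j). k < 3 \<and> j < 3 \<and> bit s k \<and> bit t j \<and> j < k}
      = length (filter (\<lambda>(k, j). bit s k \<and> bit t j \<and> j < k) (List.product [0..<3] [0..<3]))"
    by (simp only: distinct_card distinct_filter distinct_product distinct_upt)
  moreover have
    "{k. k < 3 \<and> bit s k \<and> bit t k} = set (filter (\<lambda>k. bit s k \<and> bit t k) [0..<3])"
    by auto
  then have "prod gen_sq {k. k < 3 \<and> bit s k \<and> bit t k}
      = (\<Prod>k\<leftarrow>filter (\<lambda>k. bit s k \<and> bit t k) [0..<3]. gen_sq k)"
    by (simp only: prod.distinct_set_conv_list distinct_filter distinct_upt)
  ultimately show ?thesis
    unfolding clsign_def by (simp only:)
qed

lemma cl_mult_nth:
  "cl_mult x y $ 0 = x $ 0 * y $ 0 + x $ 1 * y $ 1 - x $ 2 * y $ 2 + x $ 3 * y $ 3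
     - x $ 4 * y $ 4 + x $ 5 * y $ 5 - x $ 6 * y $ 6 - x $ 7 * y $ 7"
  "cl_mult x y $ 1 = x $ 0 * y $ 1 + x $ 1 * y $ 0 + x $ 2 * y $ 3 - x $ 3 * y $ 2
     + x $ 4 * y $ 5 - x $ 5 * y $ 4 - x $ 6 * y $ 7 - x $ 7 * y $ 6"
  "cl_mult x y $ 2 = x $ 0 * y $ 2 + x $ 1 * y $ 3 + x $ 2 * y $ 0 - x $ 3 * y $ 1
     + x $ 4 * y $ 6 - x $ 5 * y $ 7 - x $ 6 * y $ 4 - x $ 7 * y $ 5"
  "cl_mult x y $ 3 = x $ 0 * y $ 3 + x $ 1 * y $ 2 - x $ 2 * y $ 1 + x $ 3 * y $ 0
     - x $ 4 * y $ 7 + x $ 5 * y $ 6 - x $ 6 * y $ 5 - x $ 7 * y $ 4"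
  "cl_mult x y $ 4 = x $ 0 * y $ 4 + x $ 1 * y $ 5 - x $ 2 * y $ 6 + x $ 3 * y $ 7
     + x $ 4 * y $ 0 - x $ 5 * y $ 1 + x $ 6 * y $ 2 + x $ 7 * y $ 3"
  "cl_mult x y $ 5 = x $ 0 * y $ 5 + x $ 1 * y $ 4 + x $ 2 * y $ 7 - x $ 3 * y $ 6
     - x $ 4 * y $ 1 + x $ 5 * y $ 0 + x $ 6 * y $ 3 + x $ 7 * y $ 2"
  "cl_mult x y $ 6 = x $ 0 * y $ 6 + x $ 1 * y $ 7 + x $ 2 * y $ 4 - x $ 3 * y $ 5
     - x $ 4 * y $ 2 + x $ 5 * y $ 3 + x $ 6 * y $ 0 + x $ 7 * y $ 1"
  "cl_mult x y $ 7 = x $ 0 * y $ 7 + x $ 1 * y $ 6 - x $ 2 * y $ 5 + x $ 3 * y $ 4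
     + x $ 4 * y $ 3 - x $ 5 * y $ 2 + x $ 6 * y $ 1 + x $ 7 * y $ 0"
  \<comment> \<open>expand the sums first: rewriting clsign s t for symbolic s, t is very slow\<close>
  by (simp_all add: cl_mult_def lessThan_nat_numeral)
    (simp_all add: clsign_eq gen_sq_def upt_rec bit_Suc_0_iff)

lemma dim_cl_mult [simp]: "dim_vec (cl_mult x y) = 8"
  by (simp add: cl_mult_def)

lemma dim_cl_prime [simp]: "dim_vec (cl_prime x) = 8"
  by (simp add: cl_prime_def)

lemma cl_mult_carrier [simp]: "cl_mult x y \<in> carrier_vec 8"
  by (simp add: carrier_vecI)

lemma cl_prime_carrier [simp]: "cl_prime x \<in> carrier_vec 8"
  by (simp add: carrier_vecI)

text \<open>Clifford conjugation, which negates the elements of grade 1 and 2.\<close>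

definition cl_conj :: "real vec \<Rightarrow> real vec" where
  "cl_conj x = vec 8 (\<lambda>t. if t = 0 \<or> t = 7 then x $ t else - x $ t)"

text \<open>The element p + q e_7.  As e_7 is central with e_7^2 = -1, these elements form
  the centre of Cl(1,2), a copy of the complex numbers.\<close>

definition cl_cplx :: "real \<Rightarrow> real \<Rightarrow> real vec" where
  "cl_cplx p q = vec 8 (\<lambda>t. if t = 0 then p else if t = 7 then q else 0)"

lemma cl_cplx_carrier [simp]: "cl_cplx p q \<in> carrier_vec 8"
  by (simp add: cl_cplx_def)

text \<open>The simplifier normalises the index 1 to Suc 0 here, hence the unfolded copy.\<close>

lemmas cl_coordinates = cl_mult_nth[unfolded One_nat_def] cl_prime_def prime_sign_def cl_conj_def cl_cplx_def

lemma cl_mult_assoc: "cl_mult (cl_mult x y) z = cl_mult x (cl_mult y z)"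
  by (rule eq_vec8I) (simp_all add: cl_coordinates algebra_simps)

lemma cl_prime_mult: "cl_prime (cl_mult x y) = cl_mult (cl_prime y) (cl_prime x)"
  by (rule eq_vec8I) (simp_all add: cl_coordinates algebra_simps)

lemma cl_prime_prime: "x \<in> carrier_vec 8 \<Longrightarrow> cl_prime (cl_prime x) = x"
  by (rule eq_vec8I) (simp_all add: cl_coordinates)

lemma cl_mult_one_left: "x \<in> carrier_vec 8 \<Longrightarrow> cl_mult (cl_cplx 1 0) x = x"
  by (rule eq_vec8I) (simp_all add: cl_coordinates)

lemma cl_mult_one_right: "x \<in> carrier_vec 8 \<Longrightarrow> cl_mult x (cl_cplx 1 0) = x"
  by (rule eq_vec8I) (simp_all add: cl_coordinates)

lemma cl_prime_one: "cl_prime (cl_cplx 1 0) = cl_cplx 1 0"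
  by (rule eq_vec8I) (simp_all add: cl_coordinates)

lemma cl_cplx_commute: "cl_mult (cl_cplx p q) x = cl_mult x (cl_cplx p q)"
  by (rule eq_vec8I) (simp_all add: cl_coordinates algebra_simps)

lemma cl_cplx_mult: "cl_mult (cl_cplx p q) (cl_cplx r s) = cl_cplx (p * r - q * s) (p * s + q * r)"
  by (rule eq_vec8I) (simp_all add: cl_coordinates algebra_simps)

lemma cl_mult_conj_central:
  "\<exists>p q. cl_mult a (cl_conj a) = cl_cplx p q \<and> cl_mult (cl_conj a) a = cl_cplx p q"
proof (intro exI conjI)
  let ?p = "a $ 0 * a $ 0 - a $ 1 * a $ 1 + a $ 2 * a $ 2 - a $ 3 * a $ 3
    + a $ 4 * a $ 4 - a $ 5 * a $ 5 + a $ 6 * a $ 6 - a $ 7 * a $ 7"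
  let ?q = "2 * (a $ 0 * a $ 7 - a $ 1 * a $ 6 + a $ 2 * a $ 5 - a $ 3 * a $ 4)"
  show "cl_mult a (cl_conj a) = cl_cplx ?p ?q" "cl_mult (cl_conj a) a = cl_cplx ?p ?q"
    by (rule eq_vec8I; simp add: cl_coordinates algebra_simps)+
qed

lemma cl_mult_smult_left: "x \<in> carrier_vec 8 \<Longrightarrow> cl_mult (c \<cdot>\<^sub>v x) y = c \<cdot>\<^sub>v cl_mult x y"
  by (rule eq_vec8I) (simp_all add: cl_coordinates algebra_simps)

lemma cl_mult_smult_right: "y \<in> carrier_vec 8 \<Longrightarrow> cl_mult x (c \<cdot>\<^sub>v y) = c \<cdot>\<^sub>v cl_mult x y"
  by (rule eq_vec8I) (simp_all add: cl_coordinates algebra_simps)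

lemma cl_prime_smult: "x \<in> carrier_vec 8 \<Longrightarrow> cl_prime (c \<cdot>\<^sub>v x) = c \<cdot>\<^sub>v cl_prime x"
  by (rule eq_vec8I) (simp_all add: cl_coordinates)

lemma cl_mult_prime_mult:
  assumes "a \<in> carrier_vec 8"
  shows "cl_mult (cl_mult a (cl_prime a)) a + cl_mult (cl_mult a (cl_conj a)) (cl_prime (cl_conj a))
    = (2 * (a \<bullet> a)) \<cdot>\<^sub>v a"
  using assms by (intro eq_vec8I) (simp_all add: cl_coordinates scalar_prod_8 algebra_simps)

lemma cl_mult_left_adjoint:
  "x \<in> carrier_vec 8 \<Longrightarrow> y \<in> carrier_vec 8 \<Longrightarrow> cl_mult a x \<bullet> y = x \<bullet> cl_mult (cl_prime a) y"
  by (simp add: scalar_prod_8 cl_coordinates algebra_simps)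

lemma cl_mult_right_adjoint:
  "x \<in> carrier_vec 8 \<Longrightarrow> y \<in> carrier_vec 8 \<Longrightarrow> cl_mult x a \<bullet> y = x \<bullet> cl_mult y (cl_prime a)"
  by (simp add: scalar_prod_8 cl_coordinates algebra_simps)

lemma mat_cl_mult_left_mult_vec:
  "x \<in> carrier_vec 8 \<Longrightarrow> mat 8 8 (\<lambda>(i, j). cl_mult a (unit_vec 8 j) $ i) *\<^sub>v x = cl_mult a x"
  by (intro eq_vec8I) (simp_all add: cl_coordinates scalar_prod_8 algebra_simps)

lemma mat_cl_mult_right_mult_vec:
  "x \<in> carrier_vec 8 \<Longrightarrow> mat 8 8 (\<lambda>(i, j). cl_mult (unit_vec 8 j) a $ i) *\<^sub>v x = cl_mult x a"
  by (intro eq_vec8I) (simp_all add: cl_coordinates scalar_prod_8 algebra_simps)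

lemma Lmat_eq: "Lmat a = mat 8 8 (\<lambda>(i, j). cl_mult a (unit_vec 8 j) $ i)"
  unfolding Lmat_def by (rule the_mat_representing) (simp_all add: mat_cl_mult_left_mult_vec)

lemma Rmat_eq: "Rmat a = mat 8 8 (\<lambda>(i, j). cl_mult (unit_vec 8 j) a $ i)"
  unfolding Rmat_def by (rule the_mat_representing) (simp_all add: mat_cl_mult_right_mult_vec)

lemma Lmat_carrier [simp]: "Lmat a \<in> carrier_mat 8 8" "dim_row (Lmat a) = 8" "dim_col (Lmat a) = 8"
  by (simp_all add: Lmat_eq)

lemma Rmat_carrier [simp]: "Rmat a \<in> carrier_mat 8 8" "dim_row (Rmat a) = 8" "dim_col (Rmat a) = 8"
  by (simp_all add: Rmat_eq)

lemma Lmat_mult_vec: "x \<in> carrier_vec 8 \<Longrightarrow> Lmat a *\<^sub>v x = cl_mult a x"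
  unfolding Lmat_eq by (rule mat_cl_mult_left_mult_vec)

lemma Rmat_mult_vec: "x \<in> carrier_vec 8 \<Longrightarrow> Rmat a *\<^sub>v x = cl_mult x a"
  unfolding Rmat_eq by (rule mat_cl_mult_right_mult_vec)

lemma Lmat_cl_mult: "Lmat (cl_mult a b) = Lmat a * Lmat b"
proof (rule eq_mat_on_vecI)
  show "Lmat a * Lmat b \<in> carrier_mat 8 8"
    using mult_carrier_mat[OF Lmat_carrier(1) Lmat_carrier(1)] .
  fix x :: "real vec"
  assume x: "x \<in> carrier_vec 8"
  have "(Lmat a * Lmat b) *\<^sub>v x = Lmat a *\<^sub>v (Lmat b *\<^sub>v x)"
    using assoc_mult_mat_vec[OF Lmat_carrier(1) Lmat_carrier(1) x] .
  with x show "Lmat (cl_mult a b) *\<^sub>v x = (Lmat a * Lmat b) *\<^sub>v x"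
    by (simp add: Lmat_mult_vec cl_mult_assoc)
qed simp

lemma Rmat_cl_mult: "Rmat (cl_mult a b) = Rmat b * Rmat a"
proof (rule eq_mat_on_vecI)
  show "Rmat b * Rmat a \<in> carrier_mat 8 8"
    using mult_carrier_mat[OF Rmat_carrier(1) Rmat_carrier(1)] .
  fix x :: "real vec"
  assume x: "x \<in> carrier_vec 8"
  have "(Rmat b * Rmat a) *\<^sub>v x = Rmat b *\<^sub>v (Rmat a *\<^sub>v x)"
    using assoc_mult_mat_vec[OF Rmat_carrier(1) Rmat_carrier(1) x] .
  with x show "Rmat (cl_mult a b) *\<^sub>v x = (Rmat b * Rmat a) *\<^sub>v x"
    by (simp add: Rmat_mult_vec cl_mult_assoc)
qed simp

lemma Lmat_cl_prime: "Lmat (cl_prime a) = (Lmat a)\<^sup>T"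
  by (rule transpose_eq_adjointI[where n = 8 and m = 8, symmetric])
    (simp_all add: Lmat_mult_vec cl_mult_left_adjoint)

lemma Rmat_cl_prime: "Rmat (cl_prime a) = (Rmat a)\<^sup>T"
  by (rule transpose_eq_adjointI[where n = 8 and m = 8, symmetric])
    (simp_all add: Rmat_mult_vec cl_mult_right_adjoint)

lemma Lmat_inject:
  assumes "a \<in> carrier_vec 8" and "b \<in> carrier_vec 8" and "Lmat a = Lmat b"
  shows "a = b"
proof -
  have "a = Lmat a *\<^sub>v cl_cplx 1 0"
    using assms(1) by (simp add: Lmat_mult_vec cl_mult_one_right)
  also have "\<dots> = b"
    using assms(2,3) by (simp add: Lmat_mult_vec cl_mult_one_right)
  finally show ?thesis .
qed

definition is_cl_mp :: "real vec \<Rightarrow> real vec \<Rightarrow> bool" where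
  "is_cl_mp a x \<longleftrightarrow> x \<in> carrier_vec 8 \<and> cl_mult (cl_mult a x) a = a
     \<and> cl_mult (cl_mult x a) x = x
     \<and> cl_prime (cl_mult a x) = cl_mult a x \<and> cl_prime (cl_mult x a) = cl_mult x a"

lemma is_mat_mp_Lmat:
  assumes "is_cl_mp a x"
  shows "is_mat_mp (Lmat a) (Lmat x)"
  using assms unfolding is_cl_mp_def is_mat_mp_def
  by (simp add: Lmat_cl_mult[symmetric] Lmat_cl_prime[symmetric] cl_mult_assoc)

lemma is_mat_mp_Rmat:
  assumes "is_cl_mp a x"
  shows "is_mat_mp (Rmat a) (Rmat x)"
  using assms unfolding is_cl_mp_def is_mat_mp_def
  by (simp add: Rmat_cl_mult[symmetric] Rmat_cl_prime[symmetric] cl_mult_assoc)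

lemma is_cl_mp_unique:
  assumes "is_cl_mp a x" and "is_cl_mp a y"
  shows "x = y"
proof (rule Lmat_inject)
  show "x \<in> carrier_vec 8" "y \<in> carrier_vec 8"
    using assms by (simp_all add: is_cl_mp_def)
  show "Lmat x = Lmat y"
    using is_mat_mp_unique[OF is_mat_mp_Lmat is_mat_mp_Lmat] assms .
qed

lemma cl_mp_eqI:
  assumes "is_cl_mp a x"
  shows "cl_mp a = x"
  unfolding cl_mp_def is_cl_mp_def[symmetric]
  using assms is_cl_mp_unique by blast

lemma is_cl_mp_zero: "is_cl_mp (0\<^sub>v 8) (0\<^sub>v 8)"
proof -
  have "cl_mult (0\<^sub>v 8) (0\<^sub>v 8) = 0\<^sub>v 8" "cl_prime (0\<^sub>v 8) = 0\<^sub>v 8"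
    by (rule eq_vec8I; simp add: cl_coordinates)+
  then show ?thesis by (simp add: is_cl_mp_def)
qed

lemma is_cl_mp_inverse:
  assumes "a \<in> carrier_vec 8" and "x \<in> carrier_vec 8"
    and "cl_mult a x = cl_cplx 1 0" and "cl_mult x a = cl_cplx 1 0"
  shows "is_cl_mp a x"
  using assms by (simp add: is_cl_mp_def cl_mult_one_left cl_prime_one)

lemma is_cl_mp_scaled_prime:
  assumes a: "a \<in> carrier_vec 8" and aa'a: "cl_mult (cl_mult a (cl_prime a)) a = k \<cdot>\<^sub>v a"
    and "k \<noteq> 0"
  shows "is_cl_mp a ((1 / k) \<cdot>\<^sub>v cl_prime a)"
proof -
  have a'aa': "cl_mult (cl_mult (cl_prime a) a) (cl_prime a) = k \<cdot>\<^sub>v cl_prime a"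
    using arg_cong[OF aa'a, of cl_prime] a
    by (simp add: cl_prime_mult cl_prime_prime cl_prime_smult cl_mult_assoc)
  show ?thesis
    using a aa'a a'aa' \<open>k \<noteq> 0\<close>
    by (simp add: is_cl_mp_def cl_mult_smult_left cl_mult_smult_right cl_prime_smult
        cl_prime_mult cl_prime_prime cl_mult_assoc smult_smult_assoc)
qed

lemma cl_inverse_by_conj:
  assumes "cl_mult a (cl_conj a) = cl_cplx p q" and "cl_mult (cl_conj a) a = cl_cplx p q"
    and "p\<^sup>2 + q\<^sup>2 \<noteq> 0"
  defines "x \<equiv> cl_mult (cl_conj a) (cl_cplx (p / (p\<^sup>2 + q\<^sup>2)) (- q / (p\<^sup>2 + q\<^sup>2)))"
  shows "cl_mult a x = cl_cplx 1 0" and "cl_mult x a = cl_cplx 1 0"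
proof -
  let ?c = "cl_cplx (p / (p\<^sup>2 + q\<^sup>2)) (- q / (p\<^sup>2 + q\<^sup>2))"
  have "p * (p / (p\<^sup>2 + q\<^sup>2)) - q * (- q / (p\<^sup>2 + q\<^sup>2)) = 1"
    using assms(3) by (simp add: power2_eq_square add_divide_distrib[symmetric])
  moreover have "p * (- q / (p\<^sup>2 + q\<^sup>2)) + q * (p / (p\<^sup>2 + q\<^sup>2)) = 0"
    by (simp add: field_simps)
  ultimately have unit: "cl_mult (cl_cplx p q) ?c = cl_cplx 1 0"
    by (simp only: cl_cplx_mult)
  show "cl_mult a x = cl_cplx 1 0"
    by (simp only: x_def cl_mult_assoc[symmetric] assms(1) unit)
  have "cl_mult x a = cl_mult (cl_conj a) (cl_mult a ?c)"
    by (simp only: x_def cl_mult_assoc cl_cplx_commute[of _ _ a])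
  also have "\<dots> = cl_cplx 1 0"
    by (simp only: cl_mult_assoc[symmetric] assms(2) unit)
  finally show "cl_mult x a = cl_cplx 1 0" .
qed

lemma ex_cl_mp:
  assumes a: "a \<in> carrier_vec 8"
  shows "\<exists>x. is_cl_mp a x"
proof -
  obtain p q
    where norm: "cl_mult a (cl_conj a) = cl_cplx p q" "cl_mult (cl_conj a) a = cl_cplx p q"
    using cl_mult_conj_central by blast
  consider "a = 0\<^sub>v 8" | "p\<^sup>2 + q\<^sup>2 \<noteq> 0" | "a \<noteq> 0\<^sub>v 8" "p = 0" "q = 0"
    by fastforce
  then show ?thesis
  proof cases
    case 1
    then show ?thesis using is_cl_mp_zero by blast
  next
    case 2
    then show ?thesis
      using is_cl_mp_inverse[OF a _ cl_inverse_by_conj[OF norm]] by auto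
  next
    case 3
    have "cl_mult (cl_cplx 0 0) y = 0\<^sub>v 8" for y
      by (rule eq_vec8I) (simp_all add: cl_coordinates)
    then have "cl_mult (cl_mult a (cl_prime a)) a = (2 * (a \<bullet> a)) \<cdot>\<^sub>v a"
      using cl_mult_prime_mult[OF a] norm(1) 3 by simp
    moreover have "2 * (a \<bullet> a) \<noteq> 0"
      using scalar_prod_self_eq_0D[of a] a 3 by auto
    ultimately show ?thesis
      using is_cl_mp_scaled_prime[OF a] by blast
  qed
qed

theorem proposition3p2:
  fixes a :: "real vec"
  assumes "a \<in> carrier_vec 8"
  shows "Lmat (cl_mp a) = mat_mp (Lmat a) \<and> Rmat (cl_mp a) = mat_mp (Rmat a)"
proof -
  obtain x where x: "is_cl_mp a x"
    using ex_cl_mp[OF assms] by blast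
  then have "cl_mp a = x"
    by (rule cl_mp_eqI)
  moreover have "mat_mp (Lmat a) = Lmat x" and "mat_mp (Rmat a) = Rmat x"
    using x by (simp_all add: mat_mp_eqI is_mat_mp_Lmat is_mat_mp_Rmat)
  ultimately show ?thesis
    by simp
qed

end
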